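(* Let $G=(V,E)$ be an undirected graph, $a,b\in[0,1]$, $(w_i)_{i\ge 0}$ a non-negative weight sequence with $\sum_{i\ge0}w_i=1$ and partial sums $Y_i=\sum_{k\ge i}w_k$, let $\vec{x}\in\mathbb{R}^n$ be non-negative with $\|\vec{x}\|_1\le 1$, and let $\varepsilon>0$ and $L\ge 1$ be such that $Y_i>0$ for $0\le i\le L$. Run the Randomized Propagation Algorithm (described in the context) with these inputs. Then for every node $v\in V$ and every $\ell\in\{0,1,\dots,L\}$ the computed estimators satisfy $\mathrm{E}[\hat{\vec{r}}^{(\ell)}(v)]=\vec{r}^{(\ell)}(v)$ and $\mathrm{E}[\hat{\vec{q}}^{(\ell)}(v)]=\vec{q}^{(\ell)}(v)$, where $\vec{r}^{(\ell)}=Y_\ell\,(\mathbf{D}^{-a}\mathbf{A}\mathbf{D}^{-b})^\ell\vec{x}$ and $\vec{q}^{(\ell)}=w_\ell\,(\mathbf{D}^{-a}\mathbf{A}\mathbf{D}^{-b})^\ell\vec{x}$.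
   Context: $G=(V,E)$ has $n$ nodes; $\mathbf{A}$ is its adjacency matrix, $N_u$ the neighbor set and $d_u$ the degree of node $u$, and $\mathbf{D}$ the diagonal degree matrix. Randomized Propagation Algorithm (inputs $G,\vec{x},(w_i),\varepsilon,L$): set $\hat{\vec{r}}^{(0)}=\vec{x}$ and all other vectors to $0$. For $i=0,\dots,L-1$: for each $u\in V$ with $\hat{\vec{r}}^{(i)}(u)\neq 0$ and each neighbor $v\in N_u$, let $c=\frac{Y_{i+1}}{Y_i}\cdot\frac{\hat{\vec{r}}^{(i)}(u)}{d_v^a d_u^b}$; if $c\ge\varepsilon$, add $c$ to $\hat{\vec{r}}^{(i+1)}(v)$; otherwise, with probability $c/\varepsilon$ (independently of all other random choices) add $\varepsilon$ to $\hat{\vec{r}}^{(i+1)}(v)$; then set $\hat{\vec{q}}^{(i)}(u)=\frac{w_i}{Y_i}\hat{\vec{r}}^{(i)}(u)$. Finally set $\hat{\vec{q}}^{(L)}=\frac{w_L}{Y_L}\hat{\vec{r}}^{(L)}$ and output $\hat{\vec{\pi}}=\sum_{i=0}^{L}\hat{\vec{q}}^{(i)}$. *)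

theory Defs
  imports "HOL-Probability.Probability"
begin

definition ugraph :: "'v set \<Rightarrow> ('v \<Rightarrow> 'v \<Rightarrow> bool) \<Rightarrow> bool" where
  "ugraph V E \<longleftrightarrow> finite V \<and> (\<forall>u v. E u v \<longrightarrow> u \<in> V \<and> v \<in> V) \<and> (\<forall>u v. E u v \<longrightarrow> E v u)"

definition nbrs :: "'v set \<Rightarrow> ('v \<Rightarrow> 'v \<Rightarrow> bool) \<Rightarrow> 'v \<Rightarrow> 'v set" where
  "nbrs V E u = {v \<in> V. E u v}"

definition deg :: "'v set \<Rightarrow> ('v \<Rightarrow> 'v \<Rightarrow> bool) \<Rightarrow> 'v \<Rightarrow> real" where
  "deg V E u = real (card (nbrs V E u))"

definition Ytail :: "(nat \<Rightarrow> real) \<Rightarrow> nat \<Rightarrow> real" where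
  "Ytail w i = (\<Sum>k. w (k + i))"

definition Pent :: "'v set \<Rightarrow> ('v \<Rightarrow> 'v \<Rightarrow> bool) \<Rightarrow> real \<Rightarrow> real \<Rightarrow> 'v \<Rightarrow> 'v \<Rightarrow> real" where
  "Pent V E a b v u = (if E v u then 1 / (deg V E v powr a * deg V E u powr b) else 0)"

text \<open>Matrix-vector product with D^{-a} A D^{-b} (vectors indexed by V).\<close>
definition Papply :: "'v set \<Rightarrow> ('v \<Rightarrow> 'v \<Rightarrow> bool) \<Rightarrow> real \<Rightarrow> real \<Rightarrow> ('v \<Rightarrow> real) \<Rightarrow> ('v \<Rightarrow> real)" where
  "Papply V E a b r = (\<lambda>v. \<Sum>u\<in>V. Pent V E a b v u * r u)"

definition rvec :: "'v set \<Rightarrow> ('v \<Rightarrow> 'v \<Rightarrow> bool) \<Rightarrow> real \<Rightarrow> real \<Rightarrow> (nat \<Rightarrow> real) \<Rightarrow> ('v \<Rightarrow> real) \<Rightarrow> nat \<Rightarrow> 'v \<Rightarrow> real" where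
  "rvec V E a b w x l v = Ytail w l * (Papply V E a b ^^ l) x v"

definition qvec :: "'v set \<Rightarrow> ('v \<Rightarrow> 'v \<Rightarrow> bool) \<Rightarrow> real \<Rightarrow> real \<Rightarrow> (nat \<Rightarrow> real) \<Rightarrow> ('v \<Rightarrow> real) \<Rightarrow> nat \<Rightarrow> 'v \<Rightarrow> real" where
  "qvec V E a b w x l v = w l * (Papply V E a b ^^ l) x v"

definition contrib :: "real \<Rightarrow> real \<Rightarrow> real pmf" where
  "contrib eps c = (if c \<ge> eps then return_pmf c
                    else map_pmf (\<lambda>b. if b then eps else 0) (bernoulli_pmf (c / eps)))"

definition active_pairs :: "'v set \<Rightarrow> ('v \<Rightarrow> 'v \<Rightarrow> bool) \<Rightarrow> ('v \<Rightarrow> real) \<Rightarrow> ('v \<times> 'v) set" where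
  "active_pairs V E r = {(u, v). u \<in> V \<and> r u \<noteq> 0 \<and> v \<in> nbrs V E u}"

definition rpa_step :: "'v set \<Rightarrow> ('v \<Rightarrow> 'v \<Rightarrow> bool) \<Rightarrow> real \<Rightarrow> real \<Rightarrow> (nat \<Rightarrow> real) \<Rightarrow> real
    \<Rightarrow> nat \<Rightarrow> ('v \<Rightarrow> real) \<Rightarrow> ('v \<Rightarrow> real) pmf" where
  "rpa_step V E a b w eps i r =
     map_pmf (\<lambda>f v. \<Sum>u\<in>V. if (u, v) \<in> active_pairs V E r then f (u, v) else 0)
       (Pi_pmf (active_pairs V E r) 0
          (\<lambda>(u, v). contrib eps (Ytail w (Suc i) / Ytail w i * r u / (deg V E v powr a * deg V E u powr b))))"

fun rpa_run :: "'v set \<Rightarrow> ('v \<Rightarrow> 'v \<Rightarrow> bool) \<Rightarrow> real \<Rightarrow> real \<Rightarrow> (nat \<Rightarrow> real) \<Rightarrow> real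
    \<Rightarrow> ('v \<Rightarrow> real) \<Rightarrow> nat \<Rightarrow> ('v \<Rightarrow> real) list pmf" where
  "rpa_run V E a b w eps x 0 = return_pmf [x]"
| "rpa_run V E a b w eps x (Suc i) =
     bind_pmf (rpa_run V E a b w eps x i)
       (\<lambda>rs. map_pmf (\<lambda>r'. rs @ [r']) (rpa_step V E a b w eps i (last rs)))"

definition rhat :: "('v \<Rightarrow> real) list \<Rightarrow> nat \<Rightarrow> 'v \<Rightarrow> real" where
  "rhat rs l v = (rs ! l) v"

definition qhat :: "(nat \<Rightarrow> real) \<Rightarrow> ('v \<Rightarrow> real) list \<Rightarrow> nat \<Rightarrow> 'v \<Rightarrow> real" where
  "qhat w rs l v = w l / Ytail w l * (rs ! l) v"

end

theory Submission imports Defs begin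

text \<open>Every coin flip is unbiased: a contribution c below eps becomes eps with probability c/eps,
  so its expectation is still c. Hence, given the residues of iteration i, the expected residues of
  iteration i+1 are (Y_(i+1)/Y_i) D^(-a) A D^(-b) applied to them. By linearity of expectation and
  induction, E[rhat^(l)] = (Y_l/Y_(l-1)) ... (Y_1/Y_0) (D^(-a) A D^(-b))^l x, which telescopes to
  Y_l (D^(-a) A D^(-b))^l x since Y_0 = 1; qhat^(l) is the fixed multiple w_l/Y_l of rhat^(l).\<close>

lemma integral_bind_pmf:
  fixes f :: "'b \<Rightarrow> real"
  assumes "bounded (f ` set_pmf (bind_pmf M N))"
  shows "measure_pmf.expectation (bind_pmf M N) f
       = measure_pmf.expectation M (\<lambda>x. measure_pmf.expectation (N x) f)"
proof -
  define S where "S = set_pmf (bind_pmf M N)"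
  obtain B where "B > 0" and B: "\<And>y. y \<in> S \<Longrightarrow> \<bar>f y\<bar> \<le> B"
    using assms unfolding S_def bounded_pos by auto
  \<comment> \<open>integral_bind wants an integrand bounded everywhere, so cut f off outside the support\<close>
  define g where "g y = (if y \<in> S then f y else 0)" for y
  have "measure_pmf.expectation (bind_pmf M N) f = measure_pmf.expectation (bind_pmf M N) g"
    by (intro integral_cong_AE) (auto simp: AE_measure_pmf_iff g_def S_def)
  also have "\<dots> = measure_pmf.expectation M (\<lambda>x. measure_pmf.expectation (N x) g)"
    unfolding measure_pmf_bind
    by (rule integral_bind[where K="count_space UNIV" and B=B and B'=1])
       (use \<open>B > 0\<close> in \<open>auto simp: g_def B space_subprob_algebra measure_pmf.subprob_space_axioms
          intro: measurable_measure_pmf\<close>)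
  also have "\<dots> = measure_pmf.expectation M (\<lambda>x. measure_pmf.expectation (N x) f)"
    by (intro integral_cong_AE) (auto simp: AE_measure_pmf_iff g_def S_def intro!: integral_cong_AE)
  finally show ?thesis .
qed

lemma expectation_cong_pmf:
  fixes f g :: "'a \<Rightarrow> real"
  shows "(\<And>x. x \<in> set_pmf M \<Longrightarrow> f x = g x) \<Longrightarrow>
    measure_pmf.expectation M f = measure_pmf.expectation M g"
  by (rule integral_cong_AE) (auto simp: AE_measure_pmf_iff)

lemma finite_set_pmf_contrib: "finite (set_pmf (contrib eps c))"
  by (rule finite_subset[of _ "{c, eps, 0}"]) (auto simp: contrib_def)

lemma contrib_nonneg: "eps > 0 \<Longrightarrow> y \<in> set_pmf (contrib eps c) \<Longrightarrow> 0 \<le> y"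
  by (auto simp: contrib_def split: if_splits)

lemma expectation_contrib:
  assumes "0 \<le> c" "eps > 0"
  shows "measure_pmf.expectation (contrib eps c) (\<lambda>y. y) = c"
  using assms by (simp add: contrib_def)

lemma active_pairs_iff:
  assumes "ugraph V E"
  shows "(u, v) \<in> active_pairs V E r \<longleftrightarrow> u \<in> V \<and> r u \<noteq> 0 \<and> E v u"
  using assms by (auto simp: active_pairs_def nbrs_def ugraph_def)

lemma finite_active_pairs: "ugraph V E \<Longrightarrow> finite (active_pairs V E r)"
  by (rule finite_subset[of _ "V \<times> V"]) (auto simp: ugraph_def active_pairs_def nbrs_def)

lemma finite_set_pmf_Pi_pmf_contrib:
  "ugraph V E \<Longrightarrow> finite (set_pmf (Pi_pmf (active_pairs V E r) 0 (\<lambda>p. contrib eps (c p))))"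
  by (subst set_Pi_pmf) (auto intro!: finite_PiE_dflt simp: finite_active_pairs finite_set_pmf_contrib)

lemma finite_set_pmf_rpa_step: "ugraph V E \<Longrightarrow> finite (set_pmf (rpa_step V E a b w eps i r))"
  unfolding rpa_step_def case_prod_beta by (simp add: finite_set_pmf_Pi_pmf_contrib)

lemma set_pmf_rpa_step_nonneg:
  assumes "ugraph V E" "eps > 0" "r' \<in> set_pmf (rpa_step V E a b w eps i r)"
  shows "0 \<le> r' v"
proof -
  let ?c = "\<lambda>(u, v). Ytail w (Suc i) / Ytail w i * r u / (deg V E v powr a * deg V E u powr b)"
  obtain f where f: "f \<in> set_pmf (Pi_pmf (active_pairs V E r) 0 (\<lambda>p. contrib eps (?c p)))"
    and r': "r' = (\<lambda>v. \<Sum>u\<in>V. if (u, v) \<in> active_pairs V E r then f (u, v) else 0)"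
    using assms(3) unfolding rpa_step_def case_prod_beta by auto
  have "0 \<le> f (u, v)" if "(u, v) \<in> active_pairs V E r" for u v
    using f that contrib_nonneg[OF assms(2)]
    by (subst (asm) set_Pi_pmf) (auto simp: finite_active_pairs[OF assms(1)] PiE_dflt_def)
  then show ?thesis unfolding r' by (auto intro!: sum_nonneg)
qed

lemma expectation_rpa_step:
  assumes G: "ugraph V E" and "eps > 0" and r: "\<And>u. 0 \<le> r u"
    and ratio: "0 \<le> Ytail w (Suc i) / Ytail w i"
  shows "measure_pmf.expectation (rpa_step V E a b w eps i r) (\<lambda>r'. r' v)
       = Ytail w (Suc i) / Ytail w i * Papply V E a b r v"
proof -
  define \<rho> where "\<rho> = Ytail w (Suc i) / Ytail w i"
  define c where "c p = (case p of (u, v) \<Rightarrow> \<rho> * r u / (deg V E v powr a * deg V E u powr b))" for p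
  define Q where "Q = Pi_pmf (active_pairs V E r) 0 (\<lambda>p. contrib eps (c p))"
  have "0 \<le> \<rho>" using ratio by (simp add: \<rho>_def)
  then have c_nonneg: "0 \<le> c p" for p
    using r by (auto simp: c_def split: prod.split)
  have finQ: "finite (set_pmf Q)"
    unfolding Q_def using finite_set_pmf_Pi_pmf_contrib[OF G] .
  have expectation_summand: "measure_pmf.expectation Q (\<lambda>f. if (u, v) \<in> active_pairs V E r then f (u, v) else 0)
      = \<rho> * (Pent V E a b v u * r u)" if "u \<in> V" for u
  proof (cases "(u, v) \<in> active_pairs V E r")
    case True
    have "measure_pmf.expectation Q (\<lambda>f. f (u, v))
        = measure_pmf.expectation (map_pmf (\<lambda>f. f (u, v)) Q) (\<lambda>y. y)" by simp
    also have "map_pmf (\<lambda>f. f (u, v)) Q = contrib eps (c (u, v))"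
      unfolding Q_def using True by (simp add: Pi_pmf_component finite_active_pairs[OF G])
    also have "measure_pmf.expectation \<dots> (\<lambda>y. y) = c (u, v)"
      using c_nonneg \<open>eps > 0\<close> by (rule expectation_contrib)
    finally show ?thesis
      using True by (simp add: active_pairs_iff[OF G] c_def Pent_def)
  qed (use that in \<open>auto simp: active_pairs_iff[OF G] Pent_def\<close>)
  have "measure_pmf.expectation (rpa_step V E a b w eps i r) (\<lambda>r'. r' v)
      = measure_pmf.expectation Q
          (\<lambda>f. \<Sum>u\<in>V. if (u, v) \<in> active_pairs V E r then f (u, v) else 0)"
    unfolding rpa_step_def Q_def c_def \<rho>_def case_prod_beta by simp
  also have "\<dots> = (\<Sum>u\<in>V. \<rho> * (Pent V E a b v u * r u))"
    by (subst Bochner_Integration.integral_sum) (simp_all add: integrable_measure_pmf_finite[OF finQ] expectation_summand)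
  finally show ?thesis by (simp add: Papply_def sum_distrib_left \<rho>_def)
qed

lemma expectation_Papply:
  assumes "finite V" "finite (set_pmf M)"
  shows "measure_pmf.expectation M (\<lambda>s. Papply V E a b (g s) v)
       = Papply V E a b (\<lambda>u. measure_pmf.expectation M (\<lambda>s. g s u)) v"
  using assms unfolding Papply_def by (simp add: integrable_measure_pmf_finite)

lemma finite_set_pmf_rpa_run: "ugraph V E \<Longrightarrow> finite (set_pmf (rpa_run V E a b w eps x n))"
  by (induction n) (simp_all add: finite_set_pmf_rpa_step)

lemma length_set_pmf_rpa_run:
  "rs \<in> set_pmf (rpa_run V E a b w eps x n) \<Longrightarrow> length rs = Suc n"
  by (induction n arbitrary: rs) auto

lemma set_pmf_rpa_run_nonneg:
  assumes "ugraph V E" "eps > 0" "\<And>v. 0 \<le> x v"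
    and "rs \<in> set_pmf (rpa_run V E a b w eps x n)" "k \<le> n"
  shows "0 \<le> (rs ! k) v"
  using assms(4,5)
proof (induction n arbitrary: rs)
  case 0
  then show ?case using assms(3) by simp
next
  case (Suc n)
  then obtain rs0 r' where rs0: "rs0 \<in> set_pmf (rpa_run V E a b w eps x n)"
    and "r' \<in> set_pmf (rpa_step V E a b w eps n (last rs0))" and "rs = rs0 @ [r']"
    by auto
  moreover have "length rs0 = Suc n" using length_set_pmf_rpa_run[OF rs0] .
  ultimately show ?case
    using Suc set_pmf_rpa_step_nonneg[OF assms(1,2)] by (auto simp: nth_append le_Suc_eq)
qed

lemma expectation_rpa_run_Suc:
  fixes f :: "('v \<Rightarrow> real) list \<Rightarrow> real"
  assumes "ugraph V E"
  shows "measure_pmf.expectation (rpa_run V E a b w eps x (Suc n)) f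
       = measure_pmf.expectation (rpa_run V E a b w eps x n)
           (\<lambda>rs. measure_pmf.expectation (rpa_step V E a b w eps n (last rs)) (\<lambda>r'. f (rs @ [r'])))"
proof -
  have "bounded (f ` set_pmf (rpa_run V E a b w eps x (Suc n)))"
    using finite_set_pmf_rpa_run[OF assms] by (intro finite_imp_bounded finite_imageI)
  then show ?thesis unfolding rpa_run.simps(2) by (subst integral_bind_pmf) simp_all
qed

lemma expectation_rpa_run_prefix:
  fixes f :: "('v \<Rightarrow> real) \<Rightarrow> real"
  assumes "ugraph V E" "l \<le> n"
  shows "measure_pmf.expectation (rpa_run V E a b w eps x n) (\<lambda>rs. f (rs ! l))
       = measure_pmf.expectation (rpa_run V E a b w eps x l) (\<lambda>rs. f (rs ! l))"
  using assms(2)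
proof (induction n rule: dec_induct)
  case (step m)
  have "measure_pmf.expectation (rpa_run V E a b w eps x (Suc m)) (\<lambda>rs. f (rs ! l))
      = measure_pmf.expectation (rpa_run V E a b w eps x m) (\<lambda>rs. f (rs ! l))"
  proof (unfold expectation_rpa_run_Suc[OF assms(1)], rule expectation_cong_pmf)
    fix rs assume "rs \<in> set_pmf (rpa_run V E a b w eps x m)"
    then have "length rs = Suc m" by (rule length_set_pmf_rpa_run)
    then show "measure_pmf.expectation (rpa_step V E a b w eps m (last rs)) (\<lambda>r'. f ((rs @ [r']) ! l))
        = f (rs ! l)"
      using step.hyps by (simp add: nth_append)
  qed
  then show ?case using step.IH by simp
qed simp

lemma expectation_rpa_run_last:
  assumes G: "ugraph V E" and "eps > 0" "\<And>v. 0 \<le> x v"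
    and ratio: "0 \<le> Ytail w (Suc n) / Ytail w n"
  shows "measure_pmf.expectation (rpa_run V E a b w eps x (Suc n)) (\<lambda>rs. (rs ! Suc n) v)
       = Ytail w (Suc n) / Ytail w n
         * Papply V E a b (\<lambda>u. measure_pmf.expectation (rpa_run V E a b w eps x n) (\<lambda>rs. (rs ! n) u)) v"
proof -
  let ?M = "rpa_run V E a b w eps x n"
  have "measure_pmf.expectation (rpa_run V E a b w eps x (Suc n)) (\<lambda>rs. (rs ! Suc n) v)
      = measure_pmf.expectation ?M (\<lambda>rs. Ytail w (Suc n) / Ytail w n * Papply V E a b (rs ! n) v)"
  proof (unfold expectation_rpa_run_Suc[OF G], rule expectation_cong_pmf)
    fix rs assume "rs \<in> set_pmf ?M"
    then have "length rs = Suc n" "\<And>u. 0 \<le> (rs ! n) u"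
      using length_set_pmf_rpa_run set_pmf_rpa_run_nonneg[OF G assms(2,3)] by auto
    moreover from this have "last rs = rs ! n"
      by (cases rs rule: rev_cases) auto
    ultimately show "measure_pmf.expectation (rpa_step V E a b w eps n (last rs)) (\<lambda>r'. ((rs @ [r']) ! Suc n) v)
        = Ytail w (Suc n) / Ytail w n * Papply V E a b (rs ! n) v"
      using expectation_rpa_step[OF G \<open>eps > 0\<close> _ ratio] by (simp add: nth_append)
  qed
  moreover have "finite V" using G by (simp add: ugraph_def)
  ultimately show ?thesis
    by (simp add: expectation_Papply finite_set_pmf_rpa_run[OF G])
qed

lemma expectation_rpa_run:
  assumes G: "ugraph V E" and "eps > 0" "\<And>v. 0 \<le> x v"
    and "Ytail w 0 = 1" and "\<And>i. i \<le> n \<Longrightarrow> 0 < Ytail w i"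
  shows "measure_pmf.expectation (rpa_run V E a b w eps x n) (\<lambda>rs. (rs ! n) v) = rvec V E a b w x n v"
  using assms(5)
proof (induction n arbitrary: v)
  case 0
  then show ?case using assms(4) by (simp add: rvec_def)
next
  case (Suc n)
  have Y: "0 < Ytail w n" "0 < Ytail w (Suc n)" using Suc.prems by auto
  have "(\<lambda>u. measure_pmf.expectation (rpa_run V E a b w eps x n) (\<lambda>rs. (rs ! n) u))
      = (\<lambda>u. Ytail w n * (Papply V E a b ^^ n) x u)"
    using Suc by (simp add: rvec_def)
  then show ?case
    using Y by (subst expectation_rpa_run_last[OF assms(1-3)])
      (simp_all add: rvec_def Papply_def sum_distrib_left)
qed

theorem lemma4p1:
  fixes V :: "'v set" and E :: "'v \<Rightarrow> 'v \<Rightarrow> bool"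
    and a b eps :: real and w :: "nat \<Rightarrow> real" and x :: "'v \<Rightarrow> real" and L :: nat
  assumes "ugraph V E"
    and "0 \<le> a" "a \<le> 1" "0 \<le> b" "b \<le> 1"
    and "\<And>i. 0 \<le> w i" "w sums 1"
    and "\<And>v. 0 \<le> x v" "\<And>v. v \<notin> V \<Longrightarrow> x v = 0" "(\<Sum>v\<in>V. x v) \<le> 1"
    and "eps > 0" "L \<ge> 1"
    and "\<And>i. i \<le> L \<Longrightarrow> Ytail w i > 0"
  shows "\<forall>v\<in>V. \<forall>l\<le>L.
      measure_pmf.expectation (rpa_run V E a b w eps x L) (\<lambda>rs. rhat rs l v) = rvec V E a b w x l v
    \<and> measure_pmf.expectation (rpa_run V E a b w eps x L) (\<lambda>rs. qhat w rs l v) = qvec V E a b w x l v"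
proof -
  have "Ytail w 0 = 1"
    using sums_unique[OF \<open>w sums 1\<close>] by (simp add: Ytail_def)
  then have "measure_pmf.expectation (rpa_run V E a b w eps x L) (\<lambda>rs. (rs ! l) v)
      = rvec V E a b w x l v" if "l \<le> L" for l v
    using expectation_rpa_run_prefix[OF assms(1) that, where f="\<lambda>r. r v"]
      expectation_rpa_run[OF assms(1,11,8), where n=l] assms(13) that by simp
  then show ?thesis
    using assms(13) by (simp add: rhat_def qhat_def rvec_def qvec_def less_imp_neq[symmetric])
qed

end
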